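(* Let $Q=\Diamond abcd$ be a convex quadrilateral with vertices $a,b,c,d$ in clockwise order, such that the diagonal $\overline{ac}$ is horizontal, $|ac|=1$, and $1$ is the diameter of $Q$. Let the smallest axis-parallel rectangle containing $Q$ have horizontal side length $1$ and vertical side length $W$ with $0<W\le 1$, with $a$ on its left side, $b$ on its top side, $c$ on its right side and $d$ on its bottom side. Let $r=\frac14\sqrt{1+4W^2}$. Assume $|ab|\ge \frac{\sqrt{1+W^2}}{2}$. If one of the edges adjacent to $\overline{ab}$ (namely $\overline{bc}$ or $\overline{ad}$) has length at least $\frac{\sqrt{1+W^2}}{2}$ and $W\ge \frac{1}{\sqrt3}$, then $r\le 1.6\, r_{opt}(Q)$.
   Context: For a compact set $X\subset\mathbb{R}^2$, $r_{opt}(X)$ denotes the minimum $r$ such that two closed disks of radius $r$ have union containing $X$. *)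

theory Defs
  imports "HOL-Analysis.Analysis"
begin

text \<open>Points of the plane are pairs of reals; the product metric on real \<times> real is Euclidean.\<close>

text \<open>Signed cross product (q - p) x (s - p); negative iff p, q, s make a clockwise turn.\<close>
definition cross3 :: "real \<times> real \<Rightarrow> real \<times> real \<Rightarrow> real \<times> real \<Rightarrow> real" where
  "cross3 p q s = (fst q - fst p) * (snd s - snd p) - (snd q - snd p) * (fst s - fst p)"

definition convex_quad_cw :: "real \<times> real \<Rightarrow> real \<times> real \<Rightarrow> real \<times> real \<Rightarrow> real \<times> real \<Rightarrow> bool" where
  "convex_quad_cw a b c d \<longleftrightarrow>
     cross3 a b c < 0 \<and> cross3 b c d < 0 \<and> cross3 c d a < 0 \<and> cross3 d a b < 0"

definition r_opt :: "(real \<times> real) set \<Rightarrow> real" where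
  "r_opt X = Inf {r. r \<ge> 0 \<and> (\<exists>p q. X \<subseteq> cball p r \<union> cball q r)}"

end

theory Submission
  imports Defs
begin

text \<open>Two of three points pairwise at distance at least \<open>m\<close> share a disk of any two-disk cover,
  so that disk has radius at least \<open>m / 2\<close>. Here the three points are \<open>a, b, c\<close> or \<open>a, b, d\<close>: the
  edge \<open>ab\<close> and one adjacent edge are long by hypothesis, while \<open>|ac| = 1\<close> and \<open>|bd| \<ge> W\<close>
  are long because \<open>W \<ge> 1/\<surd>3\<close>. This gives \<open>r_opt Q \<ge> \<surd>(1 + W\<^sup>2) / 4\<close>, and
  \<open>\<surd>(1 + 4W\<^sup>2) \<le> 1.6 \<surd>(1 + W\<^sup>2)\<close> for \<open>W \<le> 1\<close>.\<close>

lemma two_balls_cover_three_points_radius: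
  fixes x y z p q :: "'a::metric_space"
  assumes cover: "{x, y, z} \<subseteq> cball p r \<union> cball q r"
    and far: "m \<le> dist x y" "m \<le> dist y z" "m \<le> dist x z"
  shows "m \<le> 2 * r"
proof -
  have same_ball: "m \<le> 2 * r" if "u \<in> cball o' r" "v \<in> cball o' r" "m \<le> dist u v" for u v o'
    using that dist_triangle3[of u v o'] by (auto simp: mem_cball dist_commute)
  show ?thesis
    using cover far by (auto intro: same_ball simp: dist_commute)
qed

lemma r_opt_ge_half_of_three_points:
  assumes "bounded X" and "{x, y, z} \<subseteq> X"
    and "m \<le> dist x y" "m \<le> dist y z" "m \<le> dist x z"
  shows "m / 2 \<le> r_opt X"
  unfolding r_opt_def
proof (rule cInf_greatest)
  obtain x0 r where "X \<subseteq> cball x0 r" "0 \<le> r"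
    using \<open>bounded X\<close> unfolding bounded_subset_cball by blast
  then show "{r. r \<ge> 0 \<and> (\<exists>p q. X \<subseteq> cball p r \<union> cball q r)} \<noteq> {}"
    by blast
next
  fix r assume "r \<in> {r. r \<ge> 0 \<and> (\<exists>p q. X \<subseteq> cball p r \<union> cball q r)}"
  then obtain p q where "X \<subseteq> cball p r \<union> cball q r" by auto
  with assms have "m \<le> 2 * r"
    by (intro two_balls_cover_three_points_radius[of x y z p r q]) auto
  then show "m / 2 \<le> r" by simp
qed

lemma sqrt_one_plus_sq_le_two_mult:
  fixes W :: real
  assumes "1 / sqrt 3 \<le> W"
  shows "sqrt (1 + W\<^sup>2) \<le> 2 * W"
proof -
  have "1 \<le> W * sqrt 3"
    using assms by (simp add: field_simps)
  then have "1 \<le> (W * sqrt 3)\<^sup>2"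
    by (simp add: one_le_power)
  then have "1 + W\<^sup>2 \<le> (2 * W)\<^sup>2"
    by (simp add: power_mult_distrib)
  moreover have "0 \<le> W"
    using assms by (smt (verit) divide_nonneg_nonneg real_sqrt_ge_zero)
  ultimately show ?thesis
    by (simp add: real_le_lsqrt)
qed

lemma sqrt_one_plus_four_sq_le:
  fixes W :: real
  assumes "\<bar>W\<bar> \<le> 1"
  shows "sqrt (1 + 4 * W\<^sup>2) \<le> 1.6 * sqrt (1 + W\<^sup>2)"
proof -
  have "W\<^sup>2 \<le> 1"
    using assms by (simp add: abs_square_le_1)
  then have "1 + 4 * W\<^sup>2 \<le> 2.56 * (1 + W\<^sup>2)"
    by simp
  also have "\<dots> = (1.6 * sqrt (1 + W\<^sup>2))\<^sup>2"
    by (simp only: power_mult_distrib real_sqrt_pow2[OF add_nonneg_nonneg[OF zero_le_one zero_le_power2]])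
      (simp add: power2_eq_square)
  finally show ?thesis
    by (intro real_le_lsqrt) auto
qed

theorem lemma5:
  fixes a b c d :: "real \<times> real" and W :: real
  assumes quad: "convex_quad_cw a b c d"
    and horiz: "snd a = snd c"
    and ac: "dist a c = 1"
    and diam: "diameter (convex hull {a, b, c, d}) = 1"
    and rect_x: "\<forall>p\<in>{a, b, c, d}. fst a \<le> fst p \<and> fst p \<le> fst c"
    and rect_y: "\<forall>p\<in>{a, b, c, d}. snd d \<le> snd p \<and> snd p \<le> snd b"
    and width: "fst c - fst a = 1"
    and height: "snd b - snd d = W"
    and W_pos: "0 < W" and W_le: "W \<le> 1"
    and ab: "dist a b \<ge> sqrt (1 + W\<^sup>2) / 2"
    and adj: "dist b c \<ge> sqrt (1 + W\<^sup>2) / 2 \<or> dist a d \<ge> sqrt (1 + W\<^sup>2) / 2"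
    and W_ge: "W \<ge> 1 / sqrt 3"
  shows "sqrt (1 + 4 * W\<^sup>2) / 4 \<le> 1.6 * r_opt (convex hull {a, b, c, d})"
proof -
  define s where "s = sqrt (1 + W\<^sup>2) / 2"
  define Q where "Q = convex hull {a, b, c, d}"
  have "bounded Q" "{a, b, c, d} \<subseteq> Q"
    unfolding Q_def by (simp_all add: compact_imp_bounded compact_convex_hull hull_subset)
  have "s \<le> W"
    using sqrt_one_plus_sq_le_two_mult[OF W_ge] by (simp add: s_def)
  have "W \<le> dist b d"
    using dist_snd_le[of b d] height by (simp add: dist_real_def)
  have "s / 2 \<le> r_opt Q"
  proof (cases "s \<le> dist b c")
    case True
    with ab ac \<open>s \<le> W\<close> W_le \<open>bounded Q\<close> \<open>{a, b, c, d} \<subseteq> Q\<close> show ?thesis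
      by (intro r_opt_ge_half_of_three_points[of Q a b c]) (auto simp: s_def)
  next
    case False
    with adj ab \<open>s \<le> W\<close> \<open>W \<le> dist b d\<close> \<open>bounded Q\<close> \<open>{a, b, c, d} \<subseteq> Q\<close> show ?thesis
      by (intro r_opt_ge_half_of_three_points[of Q a b d]) (auto simp: s_def dist_commute)
  qed
  moreover have "sqrt (1 + 4 * W\<^sup>2) / 4 \<le> 1.6 * (s / 2)"
    using sqrt_one_plus_four_sq_le[of W] W_pos W_le by (simp add: s_def)
  ultimately show ?thesis
    unfolding Q_def by linarith
qed

end
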